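(* Let $l_0,l_1,l_2$ be pairwise coprime with $1\le l_0\le l_1\le l_2$, $G=x_0^{l_1l_2}+x_1^{l_0l_2}+x_2^{l_0l_1}$, and let $\lambda,\mu,\gamma\in\mathbb{C}$ be $\mathbb{Z}$-linearly independent. Let $\mathcal{F}_0$ be the foliation on $\mathbb{P}(l_0,l_1,l_2)$ (of normal degree $l_0l_1l_2+l_0+l_1+l_2$) induced by $$\beta=x_0x_1x_2G\left(\lambda l_1l_2\frac{dx_0}{x_0}+\mu l_0l_2\frac{dx_1}{x_1}+\gamma l_0l_1\frac{dx_2}{x_2}-(\lambda+\mu+\gamma)\frac{dG}{G}\right).$$ Then there are singularities of $\mathcal{F}_0$ in $\mathbb{P}(l_0,l_1,l_2)\setminus\{x_0x_1x_2=0\}$ through which no $\mathcal{F}_0$-invariant algebraic curve passes.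
   Context: $\mathbb{P}(l_0,l_1,l_2)$ is the quotient of $\mathbb{C}^3\setminus\{0\}$ by $t\cdot(x_0,x_1,x_2)=(t^{l_0}x_0,t^{l_1}x_1,t^{l_2}x_2)$. A foliation is the class of a 1-form $\omega=\sum A_idx_i$ with $A_i$ quasi-homogeneous of degree $d-l_i$ and $\sum l_ix_iA_i=0$; its singularities are the points where $\omega$ vanishes. An algebraic curve is the zero set of a nonconstant quasi-homogeneous polynomial $F$; it is invariant if $\omega\wedge dF=F\Theta$ for some polynomial 2-form $\Theta$. *)

theory Defs
  imports Complex_Main
begin

(* Polynomials in C[x0,x1,x2], represented by their coefficient functions on
   exponent triples (a,b,c) (monomial x0^a x1^b x2^c), with finite support. *)
type_synonym mono3 = "nat \<times> nat \<times> nat"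
type_synonym poly3 = "mono3 \<Rightarrow> complex"

definition is_poly3 :: "poly3 \<Rightarrow> bool" where
  "is_poly3 P \<longleftrightarrow> finite {m. P m \<noteq> 0}"

definition eval3 :: "poly3 \<Rightarrow> complex \<Rightarrow> complex \<Rightarrow> complex \<Rightarrow> complex" where
  "eval3 P z0 z1 z2 = (\<Sum>(a,b,c)\<in>{m. P m \<noteq> 0}. P (a,b,c) * z0^a * z1^b * z2^c)"

definition monom3 :: "mono3 \<Rightarrow> poly3" where
  "monom3 m = (\<lambda>n. if n = m then 1 else 0)"

definition add3 :: "poly3 \<Rightarrow> poly3 \<Rightarrow> poly3" where
  "add3 P Q = (\<lambda>m. P m + Q m)"

definition smult3 :: "complex \<Rightarrow> poly3 \<Rightarrow> poly3" where
  "smult3 c P = (\<lambda>m. c * P m)"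

definition mult3 :: "poly3 \<Rightarrow> poly3 \<Rightarrow> poly3" where
  "mult3 P Q = (\<lambda>(a,b,c). \<Sum>i\<le>a. \<Sum>j\<le>b. \<Sum>k\<le>c. P (i,j,k) * Q (a-i, b-j, c-k))"

definition pderiv3 :: "nat \<Rightarrow> poly3 \<Rightarrow> poly3" where
  "pderiv3 i P = (\<lambda>(a,b,c).
     if i = 0 then of_nat (a+1) * P (a+1,b,c)
     else if i = 1 then of_nat (b+1) * P (a,b+1,c)
     else of_nat (c+1) * P (a,b,c+1))"

definition quasi_hom3 :: "nat \<Rightarrow> nat \<Rightarrow> nat \<Rightarrow> nat \<Rightarrow> poly3 \<Rightarrow> bool" where
  "quasi_hom3 l0 l1 l2 d P \<longleftrightarrow> is_poly3 P \<and>
     (\<forall>a b c. P (a,b,c) \<noteq> 0 \<longrightarrow> l0*a + l1*b + l2*c = d)"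

definition nonconstant3 :: "poly3 \<Rightarrow> bool" where
  "nonconstant3 P \<longleftrightarrow> (\<exists>m. m \<noteq> (0,0,0) \<and> P m \<noteq> 0)"

(* singular point (affine representative in C^3 \ {0}) of the foliation
   omega = A 0 dx0 + A 1 dx1 + A 2 dx2 *)
definition fol_singular :: "(nat \<Rightarrow> poly3) \<Rightarrow> complex \<Rightarrow> complex \<Rightarrow> complex \<Rightarrow> bool" where
  "fol_singular A z0 z1 z2 \<longleftrightarrow> (z0, z1, z2) \<noteq> (0, 0, 0) \<and>
     (\<forall>i\<le>2. eval3 (A i) z0 z1 z2 = 0)"

(* F defines an invariant algebraic curve of omega = sum A i dx_i:
   F nonconstant quasi-homogeneous and omega \<and> dF = F Theta for a polynomial
   2-form Theta; the coefficient of dx_i \<and> dx_j (i<j) of omega \<and> dF is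
   A_i dF/dx_j - A_j dF/dx_i. *)
definition invariant_curve ::
  "nat \<Rightarrow> nat \<Rightarrow> nat \<Rightarrow> (nat \<Rightarrow> poly3) \<Rightarrow> poly3 \<Rightarrow> bool" where
  "invariant_curve l0 l1 l2 A F \<longleftrightarrow>
     (\<exists>d. quasi_hom3 l0 l1 l2 d F) \<and> nonconstant3 F \<and>
     (\<forall>i j. i < j \<and> j \<le> 2 \<longrightarrow>
        (\<exists>\<Theta>. is_poly3 \<Theta> \<and>
           add3 (mult3 (A i) (pderiv3 j F)) (smult3 (-1) (mult3 (A j) (pderiv3 i F)))
             = mult3 F \<Theta>))"

definition Gpoly :: "nat \<Rightarrow> nat \<Rightarrow> nat \<Rightarrow> poly3" where
  "Gpoly l0 l1 l2 = add3 (monom3 (l1*l2, 0, 0))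
      (add3 (monom3 (0, l0*l2, 0)) (monom3 (0, 0, l0*l1)))"

(* components of
   beta = x0 x1 x2 G (lam l1 l2 dx0/x0 + mu l0 l2 dx1/x1 + gam l0 l1 dx2/x2
                        - (lam+mu+gam) dG/G)
        = sum_i [ c_i (x0x1x2/x_i) G - (lam+mu+gam) x0x1x2 dG/dx_i ] dx_i *)
definition beta_fol ::
  "nat \<Rightarrow> nat \<Rightarrow> nat \<Rightarrow> complex \<Rightarrow> complex \<Rightarrow> complex \<Rightarrow> nat \<Rightarrow> poly3" where
  "beta_fol l0 l1 l2 lam mu gam i =
     (let G = Gpoly l0 l1 l2;
          c = (if i = 0 then lam * of_nat (l1*l2)
               else if i = 1 then mu * of_nat (l0*l2) else gam * of_nat (l0*l1));
          e = (if i = 0 then (0,1,1) else if i = 1 then (1,0,1) else (1,1,0))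
      in add3 (smult3 c (mult3 (monom3 e) G))
              (smult3 (-(lam+mu+gam)) (mult3 (monom3 (1,1,1)) (pderiv3 i G))))"

end

(*
  Write w_i = l0 l1 l2 / l_i and X_i = x_i^w_i. In the coordinates X_i the form beta is the
  logarithmic form with residues lam, mu, gam, -(lam+mu+gam) along X_0 X_1 X_2 (X_0+X_1+X_2) = 0,
  and every point z with (X_0(z), X_1(z), X_2(z)) = (lam, mu, gam) is a singularity off the
  coordinate lines.

  An invariant curve F = 0 is an eigenpolynomial, D F = K F, of the derivation D induced by a
  vector field that beta annihilates. The product N of the conjugates of F under the group of
  roots of unity mu_w0 x mu_w1 x mu_w2 is again an eigenpolynomial; it is a polynomial in the X_i,
  and its eigenvalue is linear in the X_i. Comparing the eigenvalues at extremal monomials, where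
  the Z-linear independence of lam, mu, gam enters, forces N = c x^m G^e with G = X_0+X_1+X_2.
  Since G(z) = lam+mu+gam is nonzero, N(z) is nonzero, hence so is F(z).
*)

theory Submission
  imports Defs "HOL-Computational_Algebra.Polynomial"
    "HOL-Library.Product_Plus" "HOL-Library.Product_Order"
begin

lemma cis_root_power_eq_1_imp_dvd:
  assumes "n > 0" and "cis (2 * pi / real n) ^ a = 1"
  shows "n dvd a"
proof -
  have "cos (2 * pi * real a / real n) = 1"
    using assms(2) by (simp add: DeMoivre complex_eq_iff mult_ac)
  then obtain k :: int where "2 * pi * real a / real n = real_of_int k * 2 * pi"
    by (subst (asm) cos_one_2pi_int) blast
  then have "real_of_int (int a) = real_of_int (k * int n)"
    using assms(1) by (simp add: field_simps)
  then have "int a = k * int n"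
    by (simp only: of_int_eq_iff)
  then show ?thesis
    by (metis dvd_triv_right int_dvd_int_iff)
qed

lemma ex_nth_root:
  assumes "n > 0" shows "\<exists>z::complex. z ^ n = x"
proof (cases "x = 0")
  case False
  with assms have "card {z::complex. z ^ n = x} = n"
    by (intro card_nth_roots)
  with assms show ?thesis
    by (metis (mono_tags) Collect_empty_eq card.empty less_irrefl)
qed (use assms in auto)

lemma finite_lex_extremum:
  fixes f g :: "'a \<Rightarrow> nat"
  assumes "finite S" "S \<noteq> {}"
  obtains x where "x \<in> S" "\<And>y. y \<in> S \<Longrightarrow> f x \<le> f y"
    "\<And>y. y \<in> S \<Longrightarrow> f y = f x \<Longrightarrow> g y \<le> g x"
proof -
  define S' where "S' = {y \<in> S. f y = Min (f ` S)}"
  have "Min (f ` S) \<in> f ` S"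
    using assms by simp
  then have "finite S'" "S' \<noteq> {}"
    using assms by (auto simp: S'_def image_iff)
  then obtain x where "x \<in> S'" "g x = Max (g ` S')"
    by (metis (no_types, lifting) Max_in finite_imageI image_iff image_is_empty)
  with \<open>finite S'\<close> assms show thesis
    by (intro that) (auto simp: S'_def)
qed

lemma sum_less_3: "(\<Sum>l<(3::nat). f l) = f 0 + f 1 + (f 2 :: 'a :: comm_monoid_add)"
  by (simp add: eval_nat_numeral add_ac)

section \<open>Polynomials in three variables\<close>

lemma less_3_cases: "(i::nat) < 3 \<Longrightarrow> i = 0 \<or> i = 1 \<or> i = 2"
  by auto

text \<open>Variable indices \<open>i \<ge> 2\<close> all denote \<open>x\<^sub>2\<close>.\<close>

definition mono_exp :: "nat \<Rightarrow> mono3 \<Rightarrow> nat" where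
  "mono_exp i = (\<lambda>(a,b,c). if i = 0 then a else if i = 1 then b else c)"

definition mono_pow :: "nat \<Rightarrow> nat \<Rightarrow> mono3" where
  "mono_pow i n = (if i = 0 then (n,0,0) else if i = 1 then (0,n,0) else (0,0,n))"

lemma mono_exp_Pair: "mono_exp i (a,b,c) = (if i = 0 then a else if i = 1 then b else c)"
  by (simp add: mono_exp_def)

lemma mono_exp_add: "mono_exp i (m + n) = mono_exp i m + mono_exp i n"
  and mono_exp_diff: "mono_exp i (m - n) = mono_exp i m - mono_exp i n"
  by (cases m; cases n; simp add: mono_exp_def)+

lemma mono_exp_mono_pow [simp]:
  "i < 3 \<Longrightarrow> j < 3 \<Longrightarrow> mono_exp j (mono_pow i n) = (if j = i then n else 0)"
  by (auto simp: mono_exp_def mono_pow_def)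

lemma mono_exp_mono: "m \<le> n \<Longrightarrow> mono_exp i m \<le> mono_exp i n"
  by (cases m; cases n) (simp add: mono_exp_def)

lemma mono_diff_add: "n \<le> m \<Longrightarrow> m - n + n = (m :: mono3)"
  by (cases m; cases n) simp

lemma mono_add_diff_cancel: "m + n - n = (m :: mono3)"
  and mono_le_add: "n \<le> m + (n :: mono3)"
  by (cases m; cases n; simp)+

lemma mono_pow_complement:
  "i < 3 \<Longrightarrow> j < 3 \<Longrightarrow> i \<noteq> j \<Longrightarrow>
    (1,1,1) - mono_pow i 1 - mono_pow j 1 + mono_pow j 1 = (1,1,1) - mono_pow i 1"
  using less_3_cases by (auto simp: mono_pow_def)

type_synonym cpoly3 = "complex poly poly poly"

definition coeff3 :: "cpoly3 \<Rightarrow> mono3 \<Rightarrow> complex" where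
  "coeff3 Q = (\<lambda>(a,b,c). coeff (coeff (coeff Q a) b) c)"

lemma coeff3_Pair: "coeff3 Q (a,b,c) = coeff (coeff (coeff Q a) b) c"
  by (simp add: coeff3_def)

lemma cpoly3_eqI: "(\<And>a b c. coeff3 Q (a,b,c) = coeff3 R (a,b,c)) \<Longrightarrow> Q = R"
  by (simp add: poly_eq_iff coeff3_Pair)

lemma coeff3_add [simp]: "coeff3 (Q + R) m = coeff3 Q m + coeff3 R m"
  and coeff3_diff [simp]: "coeff3 (Q - R) m = coeff3 Q m - coeff3 R m"
  and coeff3_minus [simp]: "coeff3 (- Q) m = - coeff3 Q m"
  and coeff3_zero [simp]: "coeff3 0 m = 0"
  and coeff3_sum: "coeff3 (\<Sum>x\<in>A. f x) m = (\<Sum>x\<in>A. coeff3 (f x) m)"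
  by (cases m; simp add: coeff3_Pair coeff_sum)+

lemma coeff3_mult: "coeff3 (Q * R) (a,b,c) =
    (\<Sum>i\<le>a. \<Sum>j\<le>b. \<Sum>k\<le>c. coeff3 Q (i,j,k) * coeff3 R (a-i,b-j,c-k))"
  by (simp add: coeff_mult coeff_sum coeff3_Pair)

lemma cpoly3_nonzero_coeff: "Q \<noteq> 0 \<Longrightarrow> \<exists>m. coeff3 Q m \<noteq> 0"
  using cpoly3_eqI[of Q 0] by auto

lemma finite_support_coeff3: "finite {m. coeff3 Q m \<noteq> 0}"
proof (rule finite_subset)
  show "{m. coeff3 Q m \<noteq> 0} \<subseteq> (\<Union>a\<le>degree Q. \<Union>b\<le>degree (coeff Q a).
          \<Union>c\<le>degree (coeff (coeff Q a) b). {(a,b,c)})"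
    by (force simp: coeff3_def intro: le_degree)
qed auto

lemma is_poly3_coeff3 [simp]: "is_poly3 (coeff3 Q)"
  by (simp add: is_poly3_def finite_support_coeff3)

lemma is_poly3_dominated: "(\<And>m. P m \<noteq> 0 \<Longrightarrow> coeff3 Q m \<noteq> 0) \<Longrightarrow> is_poly3 P"
  unfolding is_poly3_def by (rule finite_subset[OF _ finite_support_coeff3[of Q]]) auto

lemma coeff3_mult_nonzero:
  assumes "coeff3 (Q * R) m \<noteq> 0"
  obtains m1 m2 where "m = m1 + m2" "coeff3 Q m1 \<noteq> 0" "coeff3 R m2 \<noteq> 0"
proof -
  obtain a b c where m: "m = (a,b,c)" by (cases m)
  from assms obtain i j k where "i \<le> a" "j \<le> b" "k \<le> c"
      and "coeff3 Q (i,j,k) * coeff3 R (a-i,b-j,c-k) \<noteq> 0"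
    unfolding m coeff3_mult by (meson atMost_iff sum.not_neutral_contains_not_neutral)
  then show thesis
    using that[of "(i,j,k)" "(a-i,b-j,c-k)"] by (simp add: m)
qed

definition monomial3 :: "mono3 \<Rightarrow> cpoly3" where
  "monomial3 = (\<lambda>(a,b,c). monom (monom (monom 1 c) b) a)"

lemma coeff3_monomial3: "coeff3 (monomial3 m) n = (if n = m then 1 else 0)"
  by (cases m; cases n) (auto simp: monomial3_def coeff3_Pair)

lemma coeff3_monomial3_mult:
  "coeff3 (monomial3 m * Q) n = (if m \<le> n then coeff3 Q (n - m) else 0)"
  by (cases m; cases n) (simp add: monomial3_def coeff_monom_mult coeff3_Pair)

lemma monomial3_mult: "monomial3 m * monomial3 n = monomial3 (m + n)"
  by (cases m; cases n) (simp add: monomial3_def mult_monom)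

lemma monomial3_0: "monomial3 (0,0,0) = 1"
  by (simp add: monomial3_def monom_0 one_pCons)

lemma monomial3_nonzero: "monomial3 m \<noteq> 0"
  using coeff3_monomial3[of m m] by auto

definition const3 :: "complex \<Rightarrow> cpoly3" where
  "const3 x = [:[:[:x:]:]:]"

lemma coeff3_const3: "coeff3 (const3 x) m = (if m = (0,0,0) then x else 0)"
  by (cases m) (auto simp: const3_def coeff_pCons coeff3_Pair split: nat.splits)

lemma coeff3_const3_mult [simp]: "coeff3 (const3 x * Q) m = x * coeff3 Q m"
  by (cases m) (simp add: const3_def coeff3_Pair)

lemma const3_mult: "const3 (x * y) = const3 x * const3 y"
  and const3_add: "const3 (x + y) = const3 x + const3 y"
  and const3_diff: "const3 (x - y) = const3 x - const3 y"
  and const3_uminus: "const3 (- x) = - const3 x"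
  and const3_0 [simp]: "const3 0 = 0"
  by (rule cpoly3_eqI; simp add: coeff3_const3)+

lemma const3_1 [simp]: "const3 1 = 1"
  by (simp add: const3_def one_pCons)

lemma const3_of_nat: "const3 (of_nat n) = of_nat n"
  by (induction n) (simp_all add: const3_add)

lemma coeff3_of_nat_mult [simp]: "coeff3 (of_nat n * Q) m = of_nat n * coeff3 Q m"
  by (simp flip: const3_of_nat)

definition to_cpoly3 :: "poly3 \<Rightarrow> cpoly3" where
  "to_cpoly3 P = (\<Sum>m\<in>{m. P m \<noteq> 0}. const3 (P m) * monomial3 m)"

lemma coeff3_to_cpoly3 [simp]: "is_poly3 P \<Longrightarrow> coeff3 (to_cpoly3 P) = P"
  by (rule ext) (simp add: to_cpoly3_def is_poly3_def coeff3_sum coeff3_monomial3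
      if_distrib cong: if_cong)

lemma to_cpoly3_coeff3 [simp]: "to_cpoly3 (coeff3 Q) = Q"
  by (rule cpoly3_eqI) simp

lemma add3_eq_coeff3: "is_poly3 P \<Longrightarrow> is_poly3 Q \<Longrightarrow> add3 P Q = coeff3 (to_cpoly3 P + to_cpoly3 Q)"
  by (auto simp: add3_def)

lemma smult3_eq_coeff3: "is_poly3 P \<Longrightarrow> smult3 x P = coeff3 (const3 x * to_cpoly3 P)"
  by (auto simp: smult3_def)

lemma mult3_eq_coeff3: "is_poly3 P \<Longrightarrow> is_poly3 Q \<Longrightarrow> mult3 P Q = coeff3 (to_cpoly3 P * to_cpoly3 Q)"
  by (auto simp: mult3_def coeff3_mult)

lemma monom3_eq_coeff3: "monom3 m = coeff3 (monomial3 m)"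
  by (auto simp: monom3_def coeff3_monomial3)

lemma dvd_monomial3_iff: "monomial3 n dvd Q \<longleftrightarrow> (\<forall>m. coeff3 Q m \<noteq> 0 \<longrightarrow> n \<le> m)"
proof
  assume "monomial3 n dvd Q"
  then show "\<forall>m. coeff3 Q m \<noteq> 0 \<longrightarrow> n \<le> m"
    by (auto simp: coeff3_monomial3_mult dvd_def split: if_splits)
next
  assume supp: "\<forall>m. coeff3 Q m \<noteq> 0 \<longrightarrow> n \<le> m"
  define P where "P = (\<lambda>m. coeff3 Q (m + n))"
  have "{m. P m \<noteq> 0} \<subseteq> (\<lambda>m. m - n) ` {m. coeff3 Q m \<noteq> 0}"
    by (force simp: P_def intro: image_eqI[where x = "_ + n"])
  then have "is_poly3 P"
    unfolding is_poly3_def by (rule finite_subset[OF _ finite_imageI[OF finite_support_coeff3]])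
  then have "Q = monomial3 n * to_cpoly3 P"
    using supp by (intro cpoly3_eqI) (auto simp: coeff3_monomial3_mult P_def mono_diff_add)
  then show "monomial3 n dvd Q" by simp
qed

lemma monomial3_dvd_coprime:
  assumes "monomial3 n dvd monomial3 m * Q" and "\<And>i. mono_exp i n = 0 \<or> mono_exp i m = 0"
  shows "monomial3 n dvd Q"
  unfolding dvd_monomial3_iff
proof (intro allI impI)
  fix k assume "coeff3 Q k \<noteq> 0"
  moreover have "coeff3 (monomial3 m * Q) (m + k) = coeff3 Q k"
    by (cases m; cases k) (simp add: coeff3_monomial3_mult)
  ultimately have "n \<le> m + k"
    using assms(1) unfolding dvd_monomial3_iff by metis
  then show "n \<le> k"
    using assms(2)[of 0] assms(2)[of 1] assms(2)[of 2]
    by (cases n; cases m; cases k) (auto simp: mono_exp_def)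
qed

lemma pderiv3_eq: "pderiv3 i P m = of_nat (mono_exp i m + 1) * P (m + mono_pow i 1)"
  by (cases m) (simp add: pderiv3_def mono_exp_def mono_pow_def)

lemma is_poly3_pderiv3: assumes "is_poly3 P" shows "is_poly3 (pderiv3 i P)"
proof -
  have "{m. pderiv3 i P m \<noteq> 0} \<subseteq> (\<lambda>m. m - mono_pow i 1) ` {m. P m \<noteq> 0}"
    by (force simp: pderiv3_eq intro: image_eqI[where x = "_ + mono_pow i 1"])
  then show ?thesis
    using assms unfolding is_poly3_def by (meson finite_imageI finite_subset)
qed

definition eval_cpoly3 :: "cpoly3 \<Rightarrow> complex \<Rightarrow> complex \<Rightarrow> complex \<Rightarrow> complex" where
  "eval_cpoly3 Q z0 z1 z2 = poly (poly (poly Q [:[:z0:]:]) [:z1:]) z2"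

lemma eval_cpoly3_add [simp]:
    "eval_cpoly3 (Q + R) z0 z1 z2 = eval_cpoly3 Q z0 z1 z2 + eval_cpoly3 R z0 z1 z2"
  and eval_cpoly3_diff [simp]:
    "eval_cpoly3 (Q - R) z0 z1 z2 = eval_cpoly3 Q z0 z1 z2 - eval_cpoly3 R z0 z1 z2"
  and eval_cpoly3_mult [simp]:
    "eval_cpoly3 (Q * R) z0 z1 z2 = eval_cpoly3 Q z0 z1 z2 * eval_cpoly3 R z0 z1 z2"
  and eval_cpoly3_power [simp]: "eval_cpoly3 (Q ^ n) z0 z1 z2 = eval_cpoly3 Q z0 z1 z2 ^ n"
  and eval_cpoly3_sum: "eval_cpoly3 (\<Sum>x\<in>A. f x) z0 z1 z2 = (\<Sum>x\<in>A. eval_cpoly3 (f x) z0 z1 z2)"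
  and eval_cpoly3_prod: "eval_cpoly3 (\<Prod>x\<in>A. f x) z0 z1 z2 = (\<Prod>x\<in>A. eval_cpoly3 (f x) z0 z1 z2)"
  and eval_cpoly3_const3 [simp]: "eval_cpoly3 (const3 x) z0 z1 z2 = x"
  and eval_cpoly3_monomial3 [simp]: "eval_cpoly3 (monomial3 (a,b,c)) z0 z1 z2 = z0^a * z1^b * z2^c"
  by (simp_all add: eval_cpoly3_def poly_sum poly_prod const3_def monomial3_def
      poly_monom mult_ac)

lemma eval3_eq_eval_cpoly3: "eval3 P z0 z1 z2 = eval_cpoly3 (to_cpoly3 P) z0 z1 z2"
  unfolding eval3_def to_cpoly3_def eval_cpoly3_sum by (rule sum.cong) auto

section \<open>Euler operators, torus action and weighted homogeneity\<close>

definition euler3 :: "nat \<Rightarrow> cpoly3 \<Rightarrow> cpoly3" where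
  "euler3 i Q = to_cpoly3 (\<lambda>m. of_nat (mono_exp i m) * coeff3 Q m)"

lemma coeff3_euler3 [simp]: "coeff3 (euler3 i Q) m = of_nat (mono_exp i m) * coeff3 Q m"
  unfolding euler3_def by (subst coeff3_to_cpoly3) (auto intro: is_poly3_dominated[of _ Q])

lemma euler3_mult: "euler3 i (Q * R) = euler3 i Q * R + Q * euler3 i R"
proof (rule cpoly3_eqI)
  fix a b c
  have "coeff3 (euler3 i Q * R + Q * euler3 i R) (a,b,c) =
      (\<Sum>i'\<le>a. \<Sum>j\<le>b. \<Sum>k\<le>c. of_nat (mono_exp i (a,b,c)) * (coeff3 Q (i',j,k) * coeff3 R (a-i',b-j,c-k)))"
    unfolding coeff3_add coeff3_mult coeff3_euler3 sum.distrib[symmetric]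
    by (intro sum.cong refl) (auto simp: mono_exp_Pair algebra_simps)
  then show "coeff3 (euler3 i (Q * R)) (a,b,c) = coeff3 (euler3 i Q * R + Q * euler3 i R) (a,b,c)"
    by (simp add: coeff3_mult sum_distrib_left)
qed

lemma euler3_add: "euler3 i (Q + R) = euler3 i Q + euler3 i R"
  and euler3_diff: "euler3 i (Q - R) = euler3 i Q - euler3 i R"
  and euler3_const3: "euler3 i (const3 x) = 0"
  by (rule cpoly3_eqI; auto simp: algebra_simps coeff3_const3 mono_exp_def)+

lemma euler3_monomial3: "euler3 i (monomial3 m) = const3 (of_nat (mono_exp i m)) * monomial3 m"
  by (rule cpoly3_eqI) (auto simp: coeff3_monomial3)

lemma euler3_to_cpoly3_pderiv3:
  assumes "is_poly3 P"
  shows "monomial3 (mono_pow i 1) * to_cpoly3 (pderiv3 i P) = euler3 i (to_cpoly3 P)"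
  using assms is_poly3_pderiv3[OF assms]
  by (intro cpoly3_eqI) (auto simp: coeff3_monomial3_mult pderiv3_eq mono_exp_def mono_pow_def)

definition mono_eval :: "complex \<times> complex \<times> complex \<Rightarrow> mono3 \<Rightarrow> complex" where
  "mono_eval = (\<lambda>(s0,s1,s2) (a,b,c). s0^a * s1^b * s2^c)"

definition rescale3 :: "complex \<times> complex \<times> complex \<Rightarrow> cpoly3 \<Rightarrow> cpoly3" where
  "rescale3 s Q = to_cpoly3 (\<lambda>m. mono_eval s m * coeff3 Q m)"

definition cmult3 ::
    "complex \<times> complex \<times> complex \<Rightarrow> complex \<times> complex \<times> complex \<Rightarrow> complex \<times> complex \<times> complex"
  where
  "cmult3 = (\<lambda>(s0,s1,s2) (t0,t1,t2). (s0*t0, s1*t1, s2*t2))"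

lemma mono_eval_add: "mono_eval s (m + n) = mono_eval s m * mono_eval s n"
  by (cases s; cases m; cases n) (simp add: mono_eval_def power_add)

lemma coeff3_rescale3 [simp]: "coeff3 (rescale3 s Q) m = mono_eval s m * coeff3 Q m"
  unfolding rescale3_def by (subst coeff3_to_cpoly3) (auto intro: is_poly3_dominated[of _ Q])

lemma rescale3_mult: "rescale3 s (Q * R) = rescale3 s Q * rescale3 s R"
proof (rule cpoly3_eqI)
  fix a b c
  have "coeff3 (rescale3 s Q * rescale3 s R) (a,b,c) =
      (\<Sum>i\<le>a. \<Sum>j\<le>b. \<Sum>k\<le>c. mono_eval s (a,b,c) * (coeff3 Q (i,j,k) * coeff3 R (a-i,b-j,c-k)))"
    unfolding coeff3_mult coeff3_rescale3
  proof (intro sum.cong refl)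
    fix i j k assume "i \<in> {..a}" "j \<in> {..b}" "k \<in> {..c}"
    then have "(a,b,c) = (i,j,k) + (a-i,b-j,c-k)" by simp
    then have "mono_eval s (a,b,c) = mono_eval s (i,j,k) * mono_eval s (a-i,b-j,c-k)"
      by (metis mono_eval_add)
    then show "mono_eval s (i,j,k) * coeff3 Q (i,j,k) * (mono_eval s (a-i,b-j,c-k) * coeff3 R (a-i,b-j,c-k)) =
        mono_eval s (a,b,c) * (coeff3 Q (i,j,k) * coeff3 R (a-i,b-j,c-k))"
      by (simp add: ac_simps)
  qed
  then show "coeff3 (rescale3 s (Q * R)) (a,b,c) = coeff3 (rescale3 s Q * rescale3 s R) (a,b,c)"
    by (simp add: coeff3_mult sum_distrib_left)
qed

lemma rescale3_add: "rescale3 s (Q + R) = rescale3 s Q + rescale3 s R"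
  and rescale3_diff: "rescale3 s (Q - R) = rescale3 s Q - rescale3 s R"
  and rescale3_euler3: "rescale3 s (euler3 i Q) = euler3 i (rescale3 s Q)"
  by (rule cpoly3_eqI; simp add: algebra_simps)+

lemma rescale3_const3: "rescale3 s (const3 x) = const3 x"
  and rescale3_monomial3: "rescale3 s (monomial3 m) = const3 (mono_eval s m) * monomial3 m"
  and rescale3_unit: "rescale3 (1,1,1) Q = Q"
  and rescale3_rescale3: "rescale3 s (rescale3 t Q) = rescale3 (cmult3 s t) Q"
  by (rule cpoly3_eqI; auto simp: coeff3_const3 coeff3_monomial3 mono_eval_def cmult3_def
      power_mult_distrib split: prod.splits)+

lemma rescale3_one: "rescale3 s 1 = 1"
  using rescale3_const3[of s 1] by simp

lemma rescale3_sum: "rescale3 s (\<Sum>x\<in>A. f x) = (\<Sum>x\<in>A. rescale3 s (f x))"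
  by (rule cpoly3_eqI) (simp add: coeff3_sum sum_distrib_left)

lemma rescale3_prod: "rescale3 s (\<Prod>x\<in>A. f x) = (\<Prod>x\<in>A. rescale3 s (f x))"
  by (induction A rule: infinite_finite_induct) (simp_all add: rescale3_one rescale3_mult)

definition wdeg :: "nat \<Rightarrow> nat \<Rightarrow> nat \<Rightarrow> mono3 \<Rightarrow> nat" where
  "wdeg l0 l1 l2 = (\<lambda>(a,b,c). l0*a + l1*b + l2*c)"

definition weighted_hom :: "nat \<Rightarrow> nat \<Rightarrow> nat \<Rightarrow> cpoly3 \<Rightarrow> nat \<Rightarrow> bool" where
  "weighted_hom l0 l1 l2 Q D \<longleftrightarrow> (\<forall>m. wdeg l0 l1 l2 m \<noteq> D \<longrightarrow> coeff3 Q m = 0)"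

lemma wdeg_add: "wdeg l0 l1 l2 (m + n) = wdeg l0 l1 l2 m + wdeg l0 l1 l2 n"
  by (cases m; cases n) (simp add: wdeg_def algebra_simps)

lemma weighted_hom_to_cpoly3: "quasi_hom3 l0 l1 l2 d P \<Longrightarrow> weighted_hom l0 l1 l2 (to_cpoly3 P) d"
  by (auto simp: quasi_hom3_def weighted_hom_def wdeg_def)

lemma weighted_hom_wdeg: "weighted_hom l0 l1 l2 Q D \<Longrightarrow> coeff3 Q m \<noteq> 0 \<Longrightarrow> wdeg l0 l1 l2 m = D"
  unfolding weighted_hom_def by blast

lemma weighted_hom_mult:
  "weighted_hom l0 l1 l2 Q D \<Longrightarrow> weighted_hom l0 l1 l2 R E \<Longrightarrow> weighted_hom l0 l1 l2 (Q * R) (D + E)"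
  unfolding weighted_hom_def by (metis coeff3_mult_nonzero wdeg_add)

lemma weighted_hom_add:
    "weighted_hom l0 l1 l2 Q D \<Longrightarrow> weighted_hom l0 l1 l2 R D \<Longrightarrow> weighted_hom l0 l1 l2 (Q + R) D"
  and weighted_hom_diff:
    "weighted_hom l0 l1 l2 Q D \<Longrightarrow> weighted_hom l0 l1 l2 R D \<Longrightarrow> weighted_hom l0 l1 l2 (Q - R) D"
  and weighted_hom_const3_mult: "weighted_hom l0 l1 l2 Q D \<Longrightarrow> weighted_hom l0 l1 l2 (const3 x * Q) D"
  and weighted_hom_euler3: "weighted_hom l0 l1 l2 Q D \<Longrightarrow> weighted_hom l0 l1 l2 (euler3 i Q) D"
  and weighted_hom_rescale3: "weighted_hom l0 l1 l2 Q D \<Longrightarrow> weighted_hom l0 l1 l2 (rescale3 s Q) D"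
  and weighted_hom_monomial3: "weighted_hom l0 l1 l2 (monomial3 m) (wdeg l0 l1 l2 m)"
  by (auto simp: weighted_hom_def coeff3_monomial3)

lemma weighted_hom_one: "weighted_hom l0 l1 l2 1 0"
  using weighted_hom_monomial3[of l0 l1 l2 "(0,0,0)"] by (simp add: monomial3_0 wdeg_def)

lemma weighted_hom_sum:
  "(\<And>x. x \<in> A \<Longrightarrow> weighted_hom l0 l1 l2 (f x) D) \<Longrightarrow> weighted_hom l0 l1 l2 (\<Sum>x\<in>A. f x) D"
  by (induction A rule: infinite_finite_induct) (auto simp: weighted_hom_add weighted_hom_def)

lemma weighted_hom_prod:
  "(\<And>x. x \<in> A \<Longrightarrow> weighted_hom l0 l1 l2 (f x) D) \<Longrightarrow> weighted_hom l0 l1 l2 (\<Prod>x\<in>A. f x) (card A * D)"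
  by (induction A rule: infinite_finite_induct) (simp_all add: weighted_hom_one weighted_hom_mult)

lemma weighted_hom_power: "weighted_hom l0 l1 l2 Q D \<Longrightarrow> weighted_hom l0 l1 l2 (Q ^ n) (n * D)"
  by (induction n) (simp_all add: weighted_hom_one weighted_hom_mult)

lemma euler_identity:
  assumes "weighted_hom l0 l1 l2 Q d"
  shows "of_nat l0 * euler3 0 Q + of_nat l1 * euler3 1 Q + of_nat l2 * euler3 2 Q = of_nat d * Q"
proof (rule cpoly3_eqI)
  fix a b c
  have "coeff3 (of_nat l0 * euler3 0 Q + of_nat l1 * euler3 1 Q + of_nat l2 * euler3 2 Q) (a,b,c) =
      of_nat (wdeg l0 l1 l2 (a,b,c)) * coeff3 Q (a,b,c)"
    by (simp add: mono_exp_def wdeg_def algebra_simps)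
  also have "\<dots> = coeff3 (of_nat d * Q) (a,b,c)"
    using assms by (cases "wdeg l0 l1 l2 (a,b,c) = d") (auto simp: weighted_hom_def)
  finally show "coeff3 (of_nat l0 * euler3 0 Q + of_nat l1 * euler3 1 Q + of_nat l2 * euler3 2 Q) (a,b,c) =
      coeff3 (of_nat d * Q) (a,b,c)" .
qed

definition hom_part :: "nat \<Rightarrow> nat \<Rightarrow> nat \<Rightarrow> nat \<Rightarrow> cpoly3 \<Rightarrow> cpoly3" where
  "hom_part l0 l1 l2 D Q = to_cpoly3 (\<lambda>m. if wdeg l0 l1 l2 m = D then coeff3 Q m else 0)"

lemma coeff3_hom_part:
  "coeff3 (hom_part l0 l1 l2 D Q) m = (if wdeg l0 l1 l2 m = D then coeff3 Q m else 0)"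
  unfolding hom_part_def
  by (subst coeff3_to_cpoly3) (auto intro!: is_poly3_dominated[of _ Q] split: if_splits)

lemma weighted_hom_hom_part: "weighted_hom l0 l1 l2 (hom_part l0 l1 l2 D Q) D"
  by (simp add: weighted_hom_def coeff3_hom_part)

lemma hom_part_eq_self: "weighted_hom l0 l1 l2 Q D \<Longrightarrow> hom_part l0 l1 l2 D Q = Q"
  by (rule cpoly3_eqI) (auto simp: coeff3_hom_part weighted_hom_def)

lemma hom_part_mult:
  assumes R: "weighted_hom l0 l1 l2 R d"
  shows "hom_part l0 l1 l2 (D + d) (Q * R) = hom_part l0 l1 l2 D Q * R"
proof (rule cpoly3_eqI)
  fix a b c :: nat
  let ?m = "(a,b,c)" and ?QD = "hom_part l0 l1 l2 D Q"
  have "coeff3 ((Q - ?QD) * R) ?m = 0" if deg: "wdeg l0 l1 l2 ?m = D + d"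
  proof (rule ccontr)
    assume "coeff3 ((Q - ?QD) * R) ?m \<noteq> 0"
    then obtain m1 m2 where m: "?m = m1 + m2" and "coeff3 (Q - ?QD) m1 \<noteq> 0" "coeff3 R m2 \<noteq> 0"
      by (rule coeff3_mult_nonzero)
    moreover from R \<open>coeff3 R m2 \<noteq> 0\<close> have "wdeg l0 l1 l2 m2 = d"
      unfolding weighted_hom_def by blast
    ultimately show False
      using deg by (auto simp: coeff3_hom_part wdeg_add split: if_splits)
  qed
  moreover have "Q * R = ?QD * R + (Q - ?QD) * R"
    by (simp add: algebra_simps)
  moreover have "weighted_hom l0 l1 l2 (?QD * R) (D + d)"
    by (rule weighted_hom_mult[OF weighted_hom_hom_part R])
  ultimately show "coeff3 (hom_part l0 l1 l2 (D + d) (Q * R)) ?m = coeff3 (?QD * R) ?m"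
    unfolding coeff3_hom_part weighted_hom_def by (metis add_0_right coeff3_add)
qed

section \<open>The foliation\<close>

locale log_foliation =
  fixes l0 l1 l2 :: nat and lam mu gam :: complex
  assumes weights_pos: "1 \<le> l0" "1 \<le> l1" "1 \<le> l2"
    and residues_independent: "\<And>a b c :: int. of_int a * lam + of_int b * mu + of_int c * gam = 0
            \<Longrightarrow> a = 0 \<and> b = 0 \<and> c = 0"
begin

definition w :: "nat \<Rightarrow> nat" where
  "w i = (if i = 0 then l1 * l2 else if i = 1 then l0 * l2 else l0 * l1)"

definition residue :: "nat \<Rightarrow> complex" where
  "residue i = (if i = 0 then lam else if i = 1 then mu else gam)"

definition X :: "nat \<Rightarrow> cpoly3" where
  "X i = monomial3 (mono_pow i (w i))"

definition G :: cpoly3 where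
  "G = X 0 + X 1 + X 2"

text \<open>\<open>\<beta> = \<Sum>\<^sub>i w\<^sub>i (x\<^sub>0x\<^sub>1x\<^sub>2/x\<^sub>i) P\<^sub>i dx\<^sub>i\<close>.\<close>

definition P :: "nat \<Rightarrow> cpoly3" where
  "P i = const3 (residue i) * G - const3 (lam + mu + gam) * X i"

lemma w_pos: "w i > 0"
  using weights_pos by (simp add: w_def)

lemma residue_nonzero: "residue i \<noteq> 0" and residue_sum_nonzero: "lam + mu + gam \<noteq> 0"
  using residues_independent[of 1 0 0] residues_independent[of 0 1 0]
    residues_independent[of 0 0 1] residues_independent[of 1 1 1]
  by (auto simp: residue_def)

lemma l_times_w: "l0 * w 0 = l0 * l1 * l2" "l1 * w 1 = l0 * l1 * l2" "l2 * w 2 = l0 * l1 * l2"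
  by (simp_all add: w_def)

lemma P_sum: "P 0 + P 1 + P 2 = 0"
  by (simp add: P_def G_def residue_def const3_add algebra_simps)

lemma weighted_hom_X: "weighted_hom l0 l1 l2 (X i) (l0 * l1 * l2)"
  by (auto simp: weighted_hom_def X_def coeff3_monomial3 wdeg_def mono_pow_def w_def)

lemma weighted_hom_G: "weighted_hom l0 l1 l2 G (l0 * l1 * l2)"
  by (simp add: G_def weighted_hom_add weighted_hom_X)

lemma weighted_hom_P: "weighted_hom l0 l1 l2 (P i) (l0 * l1 * l2)"
  by (simp add: P_def weighted_hom_diff weighted_hom_const3_mult weighted_hom_G weighted_hom_X)

lemma to_cpoly3_Gpoly: "to_cpoly3 (Gpoly l0 l1 l2) = G"
  by (simp add: Gpoly_def G_def X_def w_def mono_pow_def add3_eq_coeff3 monom3_eq_coeff3 add.assoc)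

lemma is_poly3_Gpoly: "is_poly3 (Gpoly l0 l1 l2)"
  by (simp add: Gpoly_def add3_eq_coeff3 monom3_eq_coeff3)

lemma euler3_G: "euler3 i G = const3 (of_nat (w i)) * X i"
  by (simp add: G_def X_def euler3_add euler3_monomial3 mono_exp_def mono_pow_def w_def)

lemma beta_fol_eq:
  assumes "i < 3"
  shows "beta_fol l0 l1 l2 lam mu gam i =
    add3 (smult3 (residue i * of_nat (w i)) (mult3 (monom3 ((1,1,1) - mono_pow i 1)) (Gpoly l0 l1 l2)))
      (smult3 (- (lam + mu + gam)) (mult3 (monom3 (1,1,1)) (pderiv3 i (Gpoly l0 l1 l2))))"
  using less_3_cases[OF assms] by (auto simp: beta_fol_def Let_def residue_def w_def mono_pow_def)

lemma
  assumes "i < 3"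
  shows is_poly3_beta_fol: "is_poly3 (beta_fol l0 l1 l2 lam mu gam i)"
    and to_cpoly3_beta_fol: "to_cpoly3 (beta_fol l0 l1 l2 lam mu gam i) =
      const3 (of_nat (w i)) * monomial3 ((1,1,1) - mono_pow i 1) * P i"
proof -
  let ?m = "monomial3 ((1,1,1) - mono_pow i 1)"
  have "monomial3 (1,1,1) * to_cpoly3 (pderiv3 i (Gpoly l0 l1 l2)) =
      ?m * (monomial3 (mono_pow i 1) * to_cpoly3 (pderiv3 i (Gpoly l0 l1 l2)))"
    using less_3_cases[OF assms] by (auto simp: monomial3_mult mono_pow_def mult.assoc)
  also have "\<dots> = ?m * euler3 i G"
    by (simp only: euler3_to_cpoly3_pderiv3[OF is_poly3_Gpoly] to_cpoly3_Gpoly)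
  also have "\<dots> = ?m * (const3 (of_nat (w i)) * X i)"
    using assms by (simp add: euler3_G)
  finally have "to_cpoly3 (beta_fol l0 l1 l2 lam mu gam i) =
      const3 (residue i * of_nat (w i)) * (?m * G) - const3 (lam + mu + gam) * (?m * (const3 (of_nat (w i)) * X i))"
    using assms
    by (simp add: beta_fol_eq add3_eq_coeff3 smult3_eq_coeff3 mult3_eq_coeff3 monom3_eq_coeff3
        is_poly3_Gpoly is_poly3_pderiv3 to_cpoly3_Gpoly const3_uminus del: minus_add_distrib)
  then show "to_cpoly3 (beta_fol l0 l1 l2 lam mu gam i) =
      const3 (of_nat (w i)) * ?m * P i"
    by (simp add: P_def const3_mult algebra_simps)
  show "is_poly3 (beta_fol l0 l1 l2 lam mu gam i)"
    using assms
    by (simp add: beta_fol_eq add3_eq_coeff3 smult3_eq_coeff3 mult3_eq_coeff3 monom3_eq_coeff3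
        is_poly3_Gpoly is_poly3_pderiv3)
qed

text \<open>The \<open>dx\<^sub>i \<and> dx\<^sub>j\<close>-coefficient of \<open>\<beta> \<and> dQ\<close>, divided by the monomial \<open>x\<^sub>0x\<^sub>1x\<^sub>2/(x\<^sub>ix\<^sub>j)\<close>.\<close>

definition beta_wedge :: "nat \<Rightarrow> nat \<Rightarrow> cpoly3 \<Rightarrow> cpoly3" where
  "beta_wedge i j Q = of_nat (w i) * P i * euler3 j Q - of_nat (w j) * P j * euler3 i Q"

lemma to_cpoly3_beta_fol_wedge:
  assumes "is_poly3 F" "i < 3" "j < 3" "i \<noteq> j"
  shows "to_cpoly3 (add3 (mult3 (beta_fol l0 l1 l2 lam mu gam i) (pderiv3 j F))
      (smult3 (-1) (mult3 (beta_fol l0 l1 l2 lam mu gam j) (pderiv3 i F)))) =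
    monomial3 ((1,1,1) - mono_pow i 1 - mono_pow j 1) * beta_wedge i j (to_cpoly3 F)"
proof -
  have "to_cpoly3 (beta_fol l0 l1 l2 lam mu gam i) * to_cpoly3 (pderiv3 j F) =
      monomial3 ((1,1,1) - mono_pow i 1 - mono_pow j 1) * (of_nat (w i) * P i * euler3 j (to_cpoly3 F))"
    if "i < 3" "j < 3" "i \<noteq> j" for i j
  proof -
    have "monomial3 ((1,1,1) - mono_pow i 1) =
        monomial3 ((1,1,1) - mono_pow i 1 - mono_pow j 1) * monomial3 (mono_pow j 1)"
      by (simp only: monomial3_mult mono_pow_complement[OF that])
    then show ?thesis
      using that assms(1)
      by (simp add: to_cpoly3_beta_fol const3_of_nat ac_simps flip: euler3_to_cpoly3_pderiv3)
  qed
  from this[of i j] this[of j i] assms show ?thesis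
    by (simp add: add3_eq_coeff3 smult3_eq_coeff3 mult3_eq_coeff3 is_poly3_beta_fol
        is_poly3_pderiv3 beta_wedge_def const3_uminus algebra_simps)
qed

lemma beta_wedge_relation:
  assumes "weighted_hom l0 l1 l2 Q d"
  shows "of_nat l1 * beta_wedge 0 1 Q + of_nat l2 * beta_wedge 0 2 Q = of_nat (w 0 * d) * P 0 * Q"
proof -
  have "of_nat l1 * beta_wedge 0 1 Q + of_nat l2 * beta_wedge 0 2 Q =
      of_nat (w 0) * P 0 * (of_nat l0 * euler3 0 Q + of_nat l1 * euler3 1 Q + of_nat l2 * euler3 2 Q)
      - of_nat (l0 * l1 * l2) * (P 0 + P 1 + P 2) * euler3 0 Q"
    by (simp add: beta_wedge_def w_def algebra_simps)
  also have "\<dots> = of_nat (w 0) * P 0 * (of_nat d * Q) - of_nat (l0 * l1 * l2) * 0 * euler3 0 Q"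
    by (simp only: euler_identity[OF assms] P_sum)
  also have "\<dots> = of_nat (w 0 * d) * P 0 * Q"
    by (simp add: ac_simps)
  finally show ?thesis .
qed

lemma invariant_curve_wedges:
  assumes "invariant_curve l0 l1 l2 (beta_fol l0 l1 l2 lam mu gam) F" "i < j" "j \<le> 2"
  obtains T where "monomial3 ((1,1,1) - mono_pow i 1 - mono_pow j 1) * beta_wedge i j (to_cpoly3 F) =
    to_cpoly3 F * T"
proof -
  obtain \<Theta> where "is_poly3 \<Theta>"
    and eq: "add3 (mult3 (beta_fol l0 l1 l2 lam mu gam i) (pderiv3 j F))
      (smult3 (-1) (mult3 (beta_fol l0 l1 l2 lam mu gam j) (pderiv3 i F))) = mult3 F \<Theta>"
    using assms unfolding invariant_curve_def by blast
  moreover have "is_poly3 F"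
    using assms(1) by (auto simp: invariant_curve_def quasi_hom3_def)
  ultimately have "monomial3 ((1,1,1) - mono_pow i 1 - mono_pow j 1) * beta_wedge i j (to_cpoly3 F) =
      to_cpoly3 F * to_cpoly3 \<Theta>"
    using assms(2,3) by (simp only: flip: to_cpoly3_beta_fol_wedge) (simp add: mult3_eq_coeff3)
  then show thesis ..
qed

section \<open>Invariant curves are eigenpolynomials of a derivation\<close>

text \<open>\<open>\<beta>\<close> annihilates the vector field \<open>w\<^sub>0P\<^sub>0x\<^sub>1\<partial>\<^sub>1 - w\<^sub>1P\<^sub>1x\<^sub>0\<partial>\<^sub>0\<close>;
  \<open>tangent_der\<close> is the derivation it induces.\<close>

definition tangent_der :: "cpoly3 \<Rightarrow> cpoly3" where
  "tangent_der Q = beta_wedge 0 1 Q"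

lemma tangent_der_mult: "tangent_der (Q * R) = tangent_der Q * R + Q * tangent_der R"
  by (simp add: tangent_der_def beta_wedge_def euler3_mult algebra_simps)

lemma tangent_der_diff: "tangent_der (Q - R) = tangent_der Q - tangent_der R"
  by (simp add: tangent_der_def beta_wedge_def euler3_diff algebra_simps)

lemma tangent_der_const3: "tangent_der (const3 c) = 0"
  by (simp add: tangent_der_def beta_wedge_def euler3_const3)

lemma tangent_der_const3_mult: "tangent_der (const3 c * Q) = const3 c * tangent_der Q"
  by (simp add: tangent_der_mult tangent_der_const3)

lemma tangent_der_one: "tangent_der 1 = 0"
  using tangent_der_const3[of 1] by simp

lemma tangent_der_eigen_mult:
  "tangent_der Q = K * Q \<Longrightarrow> tangent_der R = L * R \<Longrightarrow> tangent_der (Q * R) = (K + L) * (Q * R)"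
  by (simp add: tangent_der_mult algebra_simps)

lemma tangent_der_eigen_power:
  "tangent_der Q = K * Q \<Longrightarrow> tangent_der (Q ^ n) = (of_nat n * K) * Q ^ n"
  by (induction n) (simp_all add: tangent_der_one tangent_der_mult algebra_simps)

lemma tangent_der_eigen_prod:
  "(\<And>x. x \<in> A \<Longrightarrow> tangent_der (f x) = g x * f x) \<Longrightarrow>
    tangent_der (\<Prod>x\<in>A. f x) = (\<Sum>x\<in>A. g x) * (\<Prod>x\<in>A. f x)"
  by (induction A rule: infinite_finite_induct) (simp_all add: tangent_der_one tangent_der_mult algebra_simps)

lemma weighted_hom_tangent_der:
  assumes "weighted_hom l0 l1 l2 Q d"
  shows "weighted_hom l0 l1 l2 (tangent_der Q) (l0 * l1 * l2 + d)"
proof -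
  have "tangent_der Q =
      const3 (of_nat (w 0)) * (P 0 * euler3 1 Q) - const3 (of_nat (w 1)) * (P 1 * euler3 0 Q)"
    by (simp add: tangent_der_def beta_wedge_def const3_of_nat mult.assoc)
  then show ?thesis
    using assms by (simp only:)
      (intro weighted_hom_diff weighted_hom_const3_mult weighted_hom_mult weighted_hom_P weighted_hom_euler3)
qed

text \<open>Combining the two wedge conditions involving \<open>dx\<^sub>0\<close> with the Euler identity
  shows that \<open>x\<^sub>2\<close> divides the cofactor \<open>T\<^sub>1\<close>.\<close>

lemma eigen_of_wedge_cofactors:
  assumes F: "F \<noteq> 0" and hom: "weighted_hom l0 l1 l2 F d"
    and T1: "monomial3 (0,0,1) * beta_wedge 0 1 F = F * T1"
    and T2: "monomial3 (0,1,0) * beta_wedge 0 2 F = F * T2"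
  obtains K where "tangent_der F = K * F"
proof -
  let ?x1 = "monomial3 (0,1,0)" and ?x2 = "monomial3 (0,0,1)"
  define B where "B = ?x1 * of_nat (w 0 * d) * P 0 - of_nat l2 * T2"
  have "?x1 * (of_nat l1 * beta_wedge 0 1 F) =
      ?x1 * (of_nat (w 0 * d) * P 0 * F) - of_nat l2 * (?x1 * beta_wedge 0 2 F)"
    unfolding beta_wedge_relation[OF hom, symmetric] by (simp add: algebra_simps)
  also have "\<dots> = F * B"
    unfolding T2 B_def by (simp add: algebra_simps)
  finally have B: "?x1 * (of_nat l1 * beta_wedge 0 1 F) = F * B" .
  have "F * (?x1 * (of_nat l1 * T1)) = ?x1 * of_nat l1 * (F * T1)"
    by (simp add: ac_simps)
  also have "\<dots> = ?x2 * (?x1 * (of_nat l1 * beta_wedge 0 1 F))"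
    unfolding T1[symmetric] by (simp add: ac_simps)
  also have "\<dots> = F * (?x2 * B)"
    unfolding B by (simp add: ac_simps)
  finally have "?x1 * (of_nat l1 * T1) = ?x2 * B"
    using F by simp
  then have "?x2 dvd ?x1 * (of_nat l1 * T1)" ..
  then have "?x2 dvd of_nat l1 * T1"
    by (rule monomial3_dvd_coprime) (simp add: mono_exp_def)
  then have "?x2 dvd T1"
    using weights_pos by (simp add: dvd_monomial3_iff)
  then obtain K where "T1 = ?x2 * K" ..
  then have "?x2 * beta_wedge 0 1 F = ?x2 * (K * F)"
    using T1 by (simp add: ac_simps)
  then have "tangent_der F = K * F"
    by (simp add: tangent_der_def monomial3_nonzero)
  then show thesis ..
qed

lemma invariant_curve_eigen:
  assumes inv: "invariant_curve l0 l1 l2 (beta_fol l0 l1 l2 lam mu gam) F"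
  obtains K d where "tangent_der (to_cpoly3 F) = K * to_cpoly3 F"
    and "to_cpoly3 F \<noteq> 0" and "weighted_hom l0 l1 l2 (to_cpoly3 F) d"
proof -
  obtain d where qh: "quasi_hom3 l0 l1 l2 d F" and nc: "nonconstant3 F"
    using inv by (auto simp: invariant_curve_def)
  have hom: "weighted_hom l0 l1 l2 (to_cpoly3 F) d"
    using qh by (rule weighted_hom_to_cpoly3)
  have F: "to_cpoly3 F \<noteq> 0"
  proof
    assume "to_cpoly3 F = 0"
    then have "F = coeff3 0"
      using qh by (metis coeff3_to_cpoly3 quasi_hom3_def)
    with nc show False by (simp add: nonconstant3_def)
  qed
  have x2: "monomial3 ((1,1,1) - mono_pow 0 1 - mono_pow 1 1) = monomial3 (0,0,1)"
    and x1: "monomial3 ((1,1,1) - mono_pow 0 1 - mono_pow 2 1) = monomial3 (0,1,0)"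
    by (simp_all add: mono_pow_def)
  obtain T1 where T1: "monomial3 (0,0,1) * beta_wedge 0 1 (to_cpoly3 F) = to_cpoly3 F * T1"
    using invariant_curve_wedges[OF inv zero_less_one one_le_numeral] unfolding x2 .
  obtain T2 where T2: "monomial3 (0,1,0) * beta_wedge 0 2 (to_cpoly3 F) = to_cpoly3 F * T2"
    using invariant_curve_wedges[OF inv zero_less_numeral order_refl] unfolding x1 .
  obtain K where "tangent_der (to_cpoly3 F) = K * to_cpoly3 F"
    by (rule eigen_of_wedge_cofactors[OF F hom T1 T2])
  then show thesis
    using F hom by (rule that)
qed

section \<open>Eigenpolynomials with linear eigenvalue\<close>

definition X_comb :: "(nat \<Rightarrow> complex) \<Rightarrow> cpoly3" where
  "X_comb k = (\<Sum>l<3. const3 (k l) * X l)"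

lemma X_comb_diff: "X_comb (\<lambda>l. a * f l - b * g l) = const3 a * X_comb f - const3 b * X_comb g"
  by (simp add: X_comb_def sum_less_3 const3_mult const3_diff algebra_simps)

lemma X_comb_add: "X_comb (\<lambda>l. f l + g l) = X_comb f + X_comb g"
  by (simp add: X_comb_def sum_less_3 const3_add algebra_simps)

lemma X_comb_scale: "const3 a * X_comb f = X_comb (\<lambda>l. a * f l)"
  by (simp add: X_comb_def sum_distrib_left const3_mult mult.assoc)

lemma X_comb_cong: "(\<And>l. l < 3 \<Longrightarrow> f l = g l) \<Longrightarrow> X_comb f = X_comb g"
  by (simp add: X_comb_def)

lemma P_eq_X_comb: "i < 3 \<Longrightarrow> P i = X_comb (\<lambda>l. residue i - (if l = i then lam + mu + gam else 0))"
  using less_3_cases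
  by (auto simp: P_def G_def X_comb_def sum_less_3 const3_diff algebra_simps)

text \<open>\<open>mono_eig l m\<close> is the coefficient of \<open>X l\<close> in the eigenvalue of the monomial \<open>m\<close>
  under the tangent derivation.\<close>

definition mono_eig :: "nat \<Rightarrow> mono3 \<Rightarrow> complex" where
  "mono_eig l m =
     of_nat (w 0 * mono_exp 1 m) * (residue 0 - (if l = 0 then lam + mu + gam else 0))
   - of_nat (w 1 * mono_exp 0 m) * (residue 1 - (if l = 1 then lam + mu + gam else 0))"

lemma tangent_der_monomial3: "tangent_der (monomial3 m) = X_comb (\<lambda>l. mono_eig l m) * monomial3 m"
  unfolding mono_eig_def X_comb_diff
  by (simp add: tangent_der_def beta_wedge_def euler3_monomial3 P_eq_X_comb const3_mult const3_of_nat
      algebra_simps)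

lemma coeff3_X_mult:
  "coeff3 (X l * Q) n = (if mono_pow l (w l) \<le> n then coeff3 Q (n - mono_pow l (w l)) else 0)"
  by (simp add: X_def coeff3_monomial3_mult)

lemma coeff3_X_comb_mult:
  "coeff3 (X_comb k * Q) n =
    (\<Sum>l<3. if mono_pow l (w l) \<le> n then k l * coeff3 Q (n - mono_pow l (w l)) else 0)"
  unfolding X_comb_def sum_distrib_right coeff3_sum
  by (intro sum.cong) (simp_all add: mult.assoc coeff3_X_mult)

lemma coeff3_tangent_der:
  "coeff3 (tangent_der Q) n =
    (\<Sum>l<3. if mono_pow l (w l) \<le> n
      then mono_eig l (n - mono_pow l (w l)) * coeff3 Q (n - mono_pow l (w l)) else 0)"
proof -
  let ?a = "\<lambda>l. of_nat (w 0) * (residue 0 - (if l = 0 then lam + mu + gam else 0))"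
  let ?b = "\<lambda>l. of_nat (w 1) * (residue 1 - (if l = 1 then lam + mu + gam else 0))"
  have eq: "tangent_der Q = X_comb ?a * euler3 1 Q - X_comb ?b * euler3 0 Q"
    by (simp add: tangent_der_def beta_wedge_def P_eq_X_comb flip: X_comb_scale const3_of_nat)
  then show ?thesis
    unfolding eq coeff3_diff coeff3_X_comb_mult sum_subtractf[symmetric]
    by (intro sum.cong) (simp_all add: mono_eig_def algebra_simps)
qed

lemma eigen_coeff_eq:
  assumes eig: "tangent_der Q = X_comb k * Q" and "i < 3"
    and others: "\<And>l. l < 3 \<Longrightarrow> l \<noteq> i \<Longrightarrow> mono_pow l (w l) \<le> m + mono_pow i (w i) \<Longrightarrow>
      coeff3 Q (m + mono_pow i (w i) - mono_pow l (w l)) = 0"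
  shows "(mono_eig i m - k i) * coeff3 Q m = 0"
proof -
  let ?n = "m + mono_pow i (w i)"
  let ?f = "\<lambda>l. if mono_pow l (w l) \<le> ?n
    then (mono_eig l (?n - mono_pow l (w l)) - k l) * coeff3 Q (?n - mono_pow l (w l)) else 0"
  have "0 = coeff3 (tangent_der Q - X_comb k * Q) ?n"
    by (simp add: eig)
  also have "\<dots> = (\<Sum>l<3. ?f l)"
    by (simp add: coeff3_tangent_der coeff3_X_comb_mult flip: sum_subtractf)
      (intro sum.cong; simp add: algebra_simps)
  also have "\<dots> = ?f i + (\<Sum>l\<in>{..<3} - {i}. ?f l)"
    using \<open>i < 3\<close> by (simp add: sum.remove)
  also have "(\<Sum>l\<in>{..<3} - {i}. ?f l) = 0"
    using others by (intro sum.neutral) auto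
  finally show ?thesis
    by (simp add: mono_add_diff_cancel mono_le_add)
qed

text \<open>Take \<open>m\<close> with minimal \<open>x\<^sub>j\<close>-exponent and, among those, maximal
  \<open>x\<^sub>i\<close>-exponent; then \<open>x\<^sup>m X\<^sub>i\<close> receives no contribution from other monomials.\<close>

lemma eigen_extremal_monomial:
  assumes eig: "tangent_der Q = X_comb k * Q" and "Q \<noteq> 0" and ij: "i < 3" "j < 3" "i \<noteq> j"
  obtains m where "coeff3 Q m \<noteq> 0" "mono_eig i m = k i"
    "\<And>m'. coeff3 Q m' \<noteq> 0 \<Longrightarrow> mono_exp j m \<le> mono_exp j m'"
proof -
  have "{m. coeff3 Q m \<noteq> 0} \<noteq> {}"
    using cpoly3_nonzero_coeff[OF \<open>Q \<noteq> 0\<close>] by blast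
  then obtain m where m: "m \<in> {m. coeff3 Q m \<noteq> 0}"
    and min: "\<And>m'. m' \<in> {m. coeff3 Q m \<noteq> 0} \<Longrightarrow> mono_exp j m \<le> mono_exp j m'"
    and max: "\<And>m'. m' \<in> {m. coeff3 Q m \<noteq> 0} \<Longrightarrow> mono_exp j m' = mono_exp j m \<Longrightarrow>
      mono_exp i m' \<le> mono_exp i m"
    by (rule finite_lex_extremum[OF finite_support_coeff3, where f = "mono_exp j" and g = "mono_exp i"])
      blast
  have "(mono_eig i m - k i) * coeff3 Q m = 0"
  proof (rule eigen_coeff_eq[OF eig \<open>i < 3\<close>])
    fix l assume l: "l < 3" "l \<noteq> i" and le: "mono_pow l (w l) \<le> m + mono_pow i (w i)"
    let ?m' = "m + mono_pow i (w i) - mono_pow l (w l)"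
    have exp: "mono_exp h ?m' = mono_exp h m + (if h = i then w i else 0) - (if h = l then w l else 0)"
      if "h < 3" for h
      using that ij l by (simp add: mono_exp_add mono_exp_diff)
    show "coeff3 Q ?m' = 0"
    proof (rule ccontr)
      assume nz: "coeff3 Q ?m' \<noteq> 0"
      show False
      proof (cases "l = j")
        case True
        have "w j \<le> mono_exp j m"
          using mono_exp_mono[OF le, of j] ij l True by (simp add: mono_exp_add)
        then have "mono_exp j ?m' < mono_exp j m"
          using exp[of j] ij True w_pos[of j] by simp
        with min nz show False by fastforce
      next
        case False
        then have "mono_exp j ?m' = mono_exp j m"
          using exp[of j] ij l by simp
        then have "mono_exp i ?m' \<le> mono_exp i m"
          using max nz by blast
        then show False
          using exp[of i] ij l w_pos[of i] by simp
      qed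
    qed
  qed
  then show thesis
    using that m min by auto
qed

lemma mono_eig_inj:
  assumes "i < 3" and deg: "wdeg l0 l1 l2 m = wdeg l0 l1 l2 m'" and eig: "mono_eig i m = mono_eig i m'"
  shows "m = m'"
proof -
  obtain a b c a' b' c' where m: "m = (a,b,c)" "m' = (a',b',c')"
    by (cases m; cases m')
  let ?da = "int (w 1) * (int a' - int a)" and ?db = "int (w 0) * (int b' - int b)"
  consider "i = 0" | "i = 1" | "i = 2"
    using less_3_cases[OF \<open>i < 3\<close>] by blast
  then have "?da = 0 \<and> ?db = 0"
  proof cases
    case 1
    then have "of_int 0 * lam + of_int (?db + ?da) * mu + of_int ?db * gam = 0"
      using eig by (simp add: mono_eig_def m mono_exp_def residue_def algebra_simps)
    then show ?thesis using residues_independent by fastforce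
  next
    case 2
    then have "of_int (- ?db - ?da) * lam + of_int 0 * mu + of_int (- ?da) * gam = 0"
      using eig by (simp add: mono_eig_def m mono_exp_def residue_def algebra_simps)
    then show ?thesis using residues_independent by fastforce
  next
    case 3
    then have "of_int (- ?db) * lam + of_int ?da * mu + of_int 0 * gam = 0"
      using eig by (simp add: mono_eig_def m mono_exp_def residue_def algebra_simps)
    then show ?thesis using residues_independent by fastforce
  qed
  then have "a = a'" "b = b'"
    using w_pos[of 0] w_pos[of 1] by auto
  moreover have "c = c'"
    using deg weights_pos by (simp add: m wdeg_def \<open>a = a'\<close> \<open>b = b'\<close>)
  ultimately show ?thesis
    by (simp add: m)
qed

lemma eigen_eq_0_if_coeff_eq_0:
  assumes eig: "tangent_der g = X_comb k * g" and hom: "weighted_hom l0 l1 l2 g D"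
    and m: "wdeg l0 l1 l2 m = D" "mono_eig 0 m = k 0" "coeff3 g m = 0"
  shows "g = 0"
proof (rule ccontr)
  assume "g \<noteq> 0"
  then obtain m' where m': "coeff3 g m' \<noteq> 0" "mono_eig 0 m' = k 0"
    by (rule eigen_extremal_monomial[OF eig _ _ _, of 0 1]) auto
  then have "m' = m"
    using mono_eig_inj[of 0 m' m] weighted_hom_wdeg[OF hom] m by simp
  with m' m show False by simp
qed

lemma eigen_minimal_monomial:
  assumes eig: "tangent_der Q = X_comb k * Q" and "Q \<noteq> 0"
    and hom: "weighted_hom l0 l1 l2 Q D" and "i < 3"
  obtains m where "coeff3 Q m \<noteq> 0" "mono_eig i m = k i"
    "\<And>j m'. j < 3 \<Longrightarrow> j \<noteq> i \<Longrightarrow> coeff3 Q m' \<noteq> 0 \<Longrightarrow> mono_exp j m \<le> mono_exp j m'"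
proof -
  have j0: "(if i = 0 then 1 else 0) < (3::nat)" "i \<noteq> (if i = 0 then 1 else 0)"
    by auto
  obtain m where m: "coeff3 Q m \<noteq> 0" "mono_eig i m = k i"
    using eigen_extremal_monomial[OF eig \<open>Q \<noteq> 0\<close> \<open>i < 3\<close> j0] by blast
  have "mono_exp j m \<le> mono_exp j m'" if j: "j < 3" "j \<noteq> i" and "coeff3 Q m' \<noteq> 0" for j m'
  proof -
    obtain mj where mj: "coeff3 Q mj \<noteq> 0" "mono_eig i mj = k i"
      and min: "\<And>m'. coeff3 Q m' \<noteq> 0 \<Longrightarrow> mono_exp j mj \<le> mono_exp j m'"
      using eigen_extremal_monomial[OF eig \<open>Q \<noteq> 0\<close> \<open>i < 3\<close> j(1) j(2)[symmetric]] by blast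
    have "mj = m"
      using mono_eig_inj[OF \<open>i < 3\<close>] weighted_hom_wdeg[OF hom] mj m by metis
    with min \<open>coeff3 Q m' \<noteq> 0\<close> show ?thesis by blast
  qed
  with m that show thesis by blast
qed

lemma tangent_der_G:
  "tangent_der G = X_comb (\<lambda>l. of_nat (w 0 * w 1) * (if l = 0 then - mu else if l = 1 then lam else 0)) * G"
  unfolding tangent_der_def beta_wedge_def euler3_G
  by (simp add: X_comb_def sum_less_3 P_def G_def residue_def const3_of_nat const3_mult const3_uminus
      algebra_simps)

lemma tangent_der_monomial3_G_power:
  "tangent_der (monomial3 m * G ^ e) =
    X_comb (\<lambda>l. mono_eig l m + of_nat (e * w 0 * w 1) * (if l = 0 then - mu else if l = 1 then lam else 0))
    * (monomial3 m * G ^ e)"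
  using tangent_der_eigen_mult[OF tangent_der_monomial3 tangent_der_eigen_power[OF tangent_der_G, of e]]
  by (simp add: X_comb_add X_comb_scale flip: const3_of_nat) (simp add: algebra_simps)

lemma coeff3_G_power: "coeff3 (G ^ e) (mono_pow 0 (w 0 * e)) = 1"
proof (induction e)
  case 0
  then show ?case by (simp add: mono_pow_def coeff3_monomial3 flip: monomial3_0)
next
  case (Suc e)
  have "G ^ Suc e = X 0 * G ^ e + X 1 * G ^ e + X 2 * G ^ e"
    by (simp add: G_def algebra_simps)
  then show ?case
    using Suc w_pos[of 1] w_pos[of 2] by (simp add: coeff3_X_mult mono_pow_def zero_prod_def)
qed

lemma eigen_poly_minimal_points:
  assumes eig: "tangent_der Q = X_comb k * Q" and "Q \<noteq> 0" and hom: "weighted_hom l0 l1 l2 Q D"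
  obtains a0 a b b1 c c2 where
    "coeff3 Q (a0, b, c) \<noteq> 0" "mono_eig 0 (a0, b, c) = k 0"
    "coeff3 Q (a, b1, c) \<noteq> 0" "mono_eig 1 (a, b1, c) = k 1"
    "mono_eig 2 (a, b, c2) = k 2" "a \<le> a0" "b \<le> b1"
proof -
  have idx: "(0::nat) < 3" "(1::nat) < 3" "(2::nat) < 3"
    by simp_all
  obtain m0 where m0: "coeff3 Q m0 \<noteq> 0" "mono_eig 0 m0 = k 0"
    and min0: "\<And>j m'. j < 3 \<Longrightarrow> j \<noteq> 0 \<Longrightarrow> coeff3 Q m' \<noteq> 0 \<Longrightarrow> mono_exp j m0 \<le> mono_exp j m'"
    using eigen_minimal_monomial[OF eig \<open>Q \<noteq> 0\<close> hom idx(1)] by blast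
  obtain m1 where m1: "coeff3 Q m1 \<noteq> 0" "mono_eig 1 m1 = k 1"
    and min1: "\<And>j m'. j < 3 \<Longrightarrow> j \<noteq> 1 \<Longrightarrow> coeff3 Q m' \<noteq> 0 \<Longrightarrow> mono_exp j m1 \<le> mono_exp j m'"
    using eigen_minimal_monomial[OF eig \<open>Q \<noteq> 0\<close> hom idx(2)] by blast
  obtain m2 where m2: "coeff3 Q m2 \<noteq> 0" "mono_eig 2 m2 = k 2"
    and min2: "\<And>j m'. j < 3 \<Longrightarrow> j \<noteq> 2 \<Longrightarrow> coeff3 Q m' \<noteq> 0 \<Longrightarrow> mono_exp j m2 \<le> mono_exp j m'"
    using eigen_minimal_monomial[OF eig \<open>Q \<noteq> 0\<close> hom idx(3)] by blast
  obtain a0 b c where p0: "m0 = (a0, b, c)" by (cases m0)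
  obtain a b1 c1 where p1: "m1 = (a, b1, c1)" by (cases m1)
  obtain a2 b2 c2 where p2: "m2 = (a2, b2, c2)" by (cases m2)
  have "c1 = c" "a2 = a" "b2 = b" "a \<le> a0" "b \<le> b1"
    using min0[OF idx(3), of m1] min1[OF idx(3), of m0] min1[OF idx(1), of m2] min2[OF idx(1), of m1]
      min0[OF idx(2), of m2] min2[OF idx(2), of m0] min1[OF idx(1), of m0] min0[OF idx(2), of m1] m0 m1 m2
    by (simp_all add: p0 p1 p2 mono_exp_def)
  then show thesis
    using that[of a0 b c a b1 c2] m0 m1 m2 by (simp add: p0 p1 p2)
qed

lemma X_comb_eigenvalue_of_corners:
  assumes "mono_eig 0 (a + w 0 * e, b, c) = k 0" "mono_eig 1 (a, b + w 1 * e, c') = k 1"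
    "mono_eig 2 (a, b, c'') = k 2"
  shows "X_comb k = X_comb (\<lambda>l. mono_eig l (a, b, c) +
    of_nat (e * w 0 * w 1) * (if l = 0 then - mu else if l = 1 then lam else 0))"
proof (rule X_comb_cong)
  fix l :: nat assume "l < 3"
  then consider "l = 0" | "l = 1" | "l = 2"
    using less_3_cases by blast
  then show "k l = mono_eig l (a, b, c) +
      of_nat (e * w 0 * w 1) * (if l = 0 then - mu else if l = 1 then lam else 0)"
  proof cases
    case 1
    then show ?thesis
      unfolding 1 assms(1)[symmetric] by (simp add: mono_eig_def mono_exp_def residue_def algebra_simps)
  next
    case 2
    then show ?thesis
      unfolding 2 assms(2)[symmetric] by (simp add: mono_eig_def mono_exp_def residue_def algebra_simps)
  next
    case 3
    then show ?thesis
      unfolding 3 assms(3)[symmetric] by (simp add: mono_eig_def mono_exp_def)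
  qed
qed

lemma eigen_poly_eigenvalue:
  assumes eig: "tangent_der Q = X_comb k * Q" and "Q \<noteq> 0" and hom: "weighted_hom l0 l1 l2 Q D"
    and dvd: "\<And>m i. coeff3 Q m \<noteq> 0 \<Longrightarrow> i < 3 \<Longrightarrow> w i dvd mono_exp i m"
  obtains a b c e where "coeff3 Q (a + w 0 * e, b, c) \<noteq> 0" "mono_eig 0 (a + w 0 * e, b, c) = k 0"
    "X_comb k = X_comb (\<lambda>l. mono_eig l (a, b, c) +
       of_nat (e * w 0 * w 1) * (if l = 0 then - mu else if l = 1 then lam else 0))"
proof -
  obtain a0 a b b1 c c2 where m0: "coeff3 Q (a0, b, c) \<noteq> 0" "mono_eig 0 (a0, b, c) = k 0"
    and m1: "coeff3 Q (a, b1, c) \<noteq> 0" "mono_eig 1 (a, b1, c) = k 1"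
    and m2: "mono_eig 2 (a, b, c2) = k 2" and "a \<le> a0" "b \<le> b1"
    by (rule eigen_poly_minimal_points[OF eig \<open>Q \<noteq> 0\<close> hom])
  have "w 0 dvd a0" "w 0 dvd a"
    using dvd[OF m0(1), of 0] dvd[OF m1(1), of 0] by (simp_all add: mono_exp_def)
  then have "w 0 dvd a0 - a"
    by (rule dvd_diff_nat)
  then obtain e where "a0 - a = w 0 * e" ..
  then have a0: "a0 = a + w 0 * e"
    using \<open>a \<le> a0\<close> by simp
  have "l0 * a0 + l1 * b + l2 * c = l0 * a + l1 * b1 + l2 * c"
    using weighted_hom_wdeg[OF hom m0(1)] weighted_hom_wdeg[OF hom m1(1)] by (simp add: wdeg_def)
  then have "l1 * b1 = l1 * (b + w 1 * e)"
    by (simp add: a0 w_def algebra_simps)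
  then have b1: "b1 = b + w 1 * e"
    using weights_pos by simp
  show thesis
    using m0 m1(2) m2 unfolding a0 b1 by (intro that X_comb_eigenvalue_of_corners)
qed

text \<open>An eigenpolynomial in \<open>X\<^sub>0, X\<^sub>1, X\<^sub>2\<close> has the eigenvalue of
  \<open>x\<^sup>m G\<^sup>e\<close> for an extremal monomial \<open>x\<^sup>m\<close>, so subtracting a multiple of
  \<open>x\<^sup>m G\<^sup>e\<close> kills the coefficient that determines it.\<close>

lemma eigen_poly_eq_monomial_G_power:
  assumes "Q \<noteq> 0" and hom: "weighted_hom l0 l1 l2 Q D"
    and dvd: "\<And>m i. coeff3 Q m \<noteq> 0 \<Longrightarrow> i < 3 \<Longrightarrow> w i dvd mono_exp i m"
    and eig: "tangent_der Q = X_comb k * Q"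
  obtains c m e where "c \<noteq> 0" "Q = const3 c * (monomial3 m * G ^ e)"
proof -
  obtain a b c e where m0: "coeff3 Q (a + w 0 * e, b, c) \<noteq> 0" "mono_eig 0 (a + w 0 * e, b, c) = k 0"
    and k: "X_comb k = X_comb (\<lambda>l. mono_eig l (a, b, c) +
       of_nat (e * w 0 * w 1) * (if l = 0 then - mu else if l = 1 then lam else 0))"
    by (rule eigen_poly_eigenvalue[OF eig \<open>Q \<noteq> 0\<close> hom dvd])
  define h where "h = monomial3 (a, b, c) * G ^ e"
  have h_eig: "tangent_der h = X_comb k * h"
    unfolding h_def k by (rule tangent_der_monomial3_G_power)
  have "weighted_hom l0 l1 l2 h (wdeg l0 l1 l2 (a, b, c) + e * (l0 * l1 * l2))"
    unfolding h_def by (intro weighted_hom_mult weighted_hom_monomial3 weighted_hom_power weighted_hom_G)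
  moreover have "wdeg l0 l1 l2 (a, b, c) + e * (l0 * l1 * l2) = D"
    using weighted_hom_wdeg[OF hom m0(1)] l_times_w(1) by (simp add: wdeg_def algebra_simps)
  ultimately have h_hom: "weighted_hom l0 l1 l2 h D"
    by simp
  have h_coeff: "coeff3 h (a + w 0 * e, b, c) = 1"
    using coeff3_G_power[of e] by (simp add: h_def coeff3_monomial3_mult mono_pow_def zero_prod_def)
  define g where "g = Q - const3 (coeff3 Q (a + w 0 * e, b, c)) * h"
  have "g = 0"
  proof (rule eigen_eq_0_if_coeff_eq_0)
    show "tangent_der g = X_comb k * g"
      unfolding g_def tangent_der_diff tangent_der_const3_mult eig h_eig by (simp add: algebra_simps)
    show "weighted_hom l0 l1 l2 g D"
      unfolding g_def by (intro weighted_hom_diff hom weighted_hom_const3_mult h_hom)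
    show "wdeg l0 l1 l2 (a + w 0 * e, b, c) = D" "coeff3 g (a + w 0 * e, b, c) = 0"
      using weighted_hom_wdeg[OF hom m0(1)] h_coeff by (simp_all add: g_def)
  qed (fact m0(2))
  then show thesis
    using that[of "coeff3 Q (a + w 0 * e, b, c)" "(a, b, c)" e] m0(1) by (simp add: g_def h_def)
qed

section \<open>Averaging over roots of unity\<close>

definition roots_group :: "(complex \<times> complex \<times> complex) set" where
  "roots_group = {z. z ^ w 0 = 1} \<times> {z. z ^ w 1 = 1} \<times> {z. z ^ w 2 = 1}"

lemma finite_roots_group: "finite roots_group"
  unfolding roots_group_def using w_pos by (intro finite_cartesian_product finite_nth_roots) auto

lemma unit_in_roots_group: "(1,1,1) \<in> roots_group"
  by (simp add: roots_group_def)

lemma bij_cmult3_roots_group: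
  assumes "s \<in> roots_group" shows "bij_betw (cmult3 s) roots_group roots_group"
proof -
  obtain s0 s1 s2 where s: "s = (s0,s1,s2)" "s0 ^ w 0 = 1" "s1 ^ w 1 = 1" "s2 ^ w 2 = 1"
    using assms by (auto simp: roots_group_def)
  then have "s0 \<noteq> 0" "s1 \<noteq> 0" "s2 \<noteq> 0"
    using w_pos[of 0] w_pos[of 1] w_pos[of 2] by (auto simp: power_0_left)
  then have "inj_on (cmult3 s) roots_group"
    by (auto simp: inj_on_def cmult3_def s)
  moreover have "cmult3 s ` roots_group \<subseteq> roots_group"
    using s by (auto simp: roots_group_def cmult3_def power_mult_distrib)
  ultimately show ?thesis
    using endo_inj_surj[OF finite_roots_group] by (simp add: bij_betw_def)
qed

lemma rescale3_X: "s \<in> roots_group \<Longrightarrow> rescale3 s (X i) = X i"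
  by (auto simp: X_def rescale3_monomial3 mono_eval_def roots_group_def mono_pow_def w_def)

lemma rescale3_tangent_der: "s \<in> roots_group \<Longrightarrow> rescale3 s (tangent_der Q) = tangent_der (rescale3 s Q)"
  by (simp add: tangent_der_def beta_wedge_def P_def G_def rescale3_diff rescale3_add rescale3_mult
      rescale3_const3 rescale3_X rescale3_euler3 flip: const3_of_nat)

lemma rescale3_invariant_sum:
  "s \<in> roots_group \<Longrightarrow> rescale3 s (\<Sum>t\<in>roots_group. rescale3 t Q) = (\<Sum>t\<in>roots_group. rescale3 t Q)"
  unfolding rescale3_sum rescale3_rescale3
  by (rule sum.reindex_bij_betw[OF bij_cmult3_roots_group])

lemma rescale3_invariant_prod:
  "s \<in> roots_group \<Longrightarrow> rescale3 s (\<Prod>t\<in>roots_group. rescale3 t Q) = (\<Prod>t\<in>roots_group. rescale3 t Q)"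
  unfolding rescale3_prod rescale3_rescale3
  by (rule prod.reindex_bij_betw[OF bij_cmult3_roots_group])

lemma roots_group_invariant_dvd:
  assumes inv: "\<And>s. s \<in> roots_group \<Longrightarrow> rescale3 s Q = Q" and "coeff3 Q m \<noteq> 0" "i < 3"
  shows "w i dvd mono_exp i m"
proof (rule cis_root_power_eq_1_imp_dvd)
  let ?z = "cis (2 * pi / real (w i))"
  define s where "s = (if i = 0 then (?z,1,1) else if i = 1 then (1,?z,1) else (1,1,?z))"
  have "?z ^ w i = 1"
    using w_pos[of i] by (simp add: DeMoivre)
  then have "s \<in> roots_group"
    using less_3_cases[OF \<open>i < 3\<close>] by (auto simp: s_def roots_group_def)
  then have "mono_eval s m * coeff3 Q m = coeff3 Q m"
    using inv by (metis coeff3_rescale3)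
  then have "mono_eval s m = 1"
    using \<open>coeff3 Q m \<noteq> 0\<close> by simp
  then show "?z ^ mono_exp i m = 1"
    by (cases m) (auto simp: s_def mono_eval_def mono_exp_def)
  show "w i > 0"
    using w_pos[of i] by simp
qed

lemma invariant_of_degree_G:
  assumes hom: "weighted_hom l0 l1 l2 K (l0 * l1 * l2)"
    and dvd: "\<And>m i. coeff3 K m \<noteq> 0 \<Longrightarrow> i < 3 \<Longrightarrow> w i dvd mono_exp i m"
  shows "K = X_comb (\<lambda>l. coeff3 K (mono_pow l (w l)))"
proof (rule cpoly3_eqI)
  fix a b c
  have rhs: "coeff3 (X_comb (\<lambda>l. coeff3 K (mono_pow l (w l)))) (a,b,c) =
      (\<Sum>l<3. if (a,b,c) = mono_pow l (w l) then coeff3 K (a,b,c) else 0)"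
    unfolding X_comb_def X_def coeff3_sum coeff3_const3_mult coeff3_monomial3 by (intro sum.cong) auto
  show "coeff3 K (a,b,c) = coeff3 (X_comb (\<lambda>l. coeff3 K (mono_pow l (w l)))) (a,b,c)"
  proof (cases "coeff3 K (a,b,c) = 0")
    case False
    obtain a' b' c' where abc: "a = w 0 * a'" "b = w 1 * b'" "c = w 2 * c'"
      using dvd[OF False, of 0] dvd[OF False, of 1] dvd[OF False, of 2]
      by (auto simp: mono_exp_def dvd_def)
    have "l0 * a + l1 * b + l2 * c = l0 * l1 * l2"
      using weighted_hom_wdeg[OF hom False] by (simp add: wdeg_def)
    then have "l0 * l1 * l2 * (a' + b' + c') = l0 * l1 * l2 * 1"
      by (simp add: abc w_def algebra_simps)
    then have "a' + b' + c' = 1"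
      using weights_pos by simp
    then have "(a',b',c') = (1,0,0) \<or> (a',b',c') = (0,1,0) \<or> (a',b',c') = (0,0,1)"
      by auto
    then show ?thesis
      unfolding rhs using w_pos[of 0] w_pos[of 1] w_pos[of 2]
      by (auto simp: abc sum_less_3 mono_pow_def)
  next
    case True
    then show ?thesis
      unfolding rhs True by simp
  qed
qed

definition orbit_prod :: "cpoly3 \<Rightarrow> cpoly3" where
  "orbit_prod Q = (\<Prod>s\<in>roots_group. rescale3 s Q)"

lemma orbit_prod_nonzero:
  assumes "Q \<noteq> 0" shows "orbit_prod Q \<noteq> 0"
proof -
  obtain m where m: "coeff3 Q m \<noteq> 0"
    using cpoly3_nonzero_coeff[OF assms] ..
  have "rescale3 s Q \<noteq> 0" if "s \<in> roots_group" for s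
  proof -
    have "mono_eval s m \<noteq> 0"
      using that w_pos[of 0] w_pos[of 1] w_pos[of 2]
      by (cases s; cases m) (auto simp: mono_eval_def roots_group_def power_0_left)
    then have "coeff3 (rescale3 s Q) m \<noteq> 0"
      using m by simp
    then show ?thesis by (metis coeff3_zero)
  qed
  then show ?thesis
    by (simp add: orbit_prod_def finite_roots_group)
qed

lemma weighted_hom_orbit_prod:
  "weighted_hom l0 l1 l2 Q d \<Longrightarrow> weighted_hom l0 l1 l2 (orbit_prod Q) (card roots_group * d)"
  unfolding orbit_prod_def by (intro weighted_hom_prod weighted_hom_rescale3)

lemma orbit_prod_exponents_dvd:
  "coeff3 (orbit_prod Q) m \<noteq> 0 \<Longrightarrow> i < 3 \<Longrightarrow> w i dvd mono_exp i m"
  unfolding orbit_prod_def by (rule roots_group_invariant_dvd[OF rescale3_invariant_prod])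

lemma eval_orbit_prod_eq_0:
  "eval_cpoly3 Q z0 z1 z2 = 0 \<Longrightarrow> eval_cpoly3 (orbit_prod Q) z0 z1 z2 = 0"
  unfolding orbit_prod_def eval_cpoly3_prod
  using finite_roots_group unit_in_roots_group by (force simp: rescale3_unit)

lemma orbit_prod_eigen:
  assumes eig: "tangent_der F = K * F" and hom: "weighted_hom l0 l1 l2 F d"
  obtains k where "tangent_der (orbit_prod F) = X_comb k * orbit_prod F"
proof -
  define Kh where "Kh = hom_part l0 l1 l2 (l0 * l1 * l2) K"
  have "tangent_der F = hom_part l0 l1 l2 (l0 * l1 * l2 + d) (tangent_der F)"
    using hom_part_eq_self[OF weighted_hom_tangent_der[OF hom]] by simp
  also have "\<dots> = Kh * F"
    unfolding eig Kh_def by (rule hom_part_mult[OF hom])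
  finally have eig_h: "tangent_der F = Kh * F" .
  define Kp where "Kp = (\<Sum>s\<in>roots_group. rescale3 s Kh)"
  have "tangent_der (orbit_prod F) = Kp * orbit_prod F"
    unfolding orbit_prod_def Kp_def
    by (rule tangent_der_eigen_prod) (simp add: eig_h rescale3_mult flip: rescale3_tangent_der)
  moreover have "Kp = X_comb (\<lambda>l. coeff3 Kp (mono_pow l (w l)))"
  proof (rule invariant_of_degree_G)
    show "weighted_hom l0 l1 l2 Kp (l0 * l1 * l2)"
      unfolding Kp_def Kh_def by (intro weighted_hom_sum weighted_hom_rescale3 weighted_hom_hom_part)
    show "w i dvd mono_exp i m" if "coeff3 Kp m \<noteq> 0" "i < 3" for m i
      using roots_group_invariant_dvd[OF rescale3_invariant_sum] that unfolding Kp_def by blast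
  qed
  ultimately show thesis
    using that by metis
qed

section \<open>The singular point\<close>

lemma eval_X_at_residue_roots:
  assumes "z0 ^ w 0 = lam" "z1 ^ w 1 = mu" "z2 ^ w 2 = gam"
  shows "eval_cpoly3 (X i) z0 z1 z2 = residue i"
  using assms by (simp add: X_def mono_pow_def residue_def w_def)

lemma residue_roots_nonzero:
  assumes "z0 ^ w 0 = lam" "z1 ^ w 1 = mu" "z2 ^ w 2 = gam"
  shows "z0 \<noteq> 0" "z1 \<noteq> 0" "z2 \<noteq> 0"
  using assms residue_nonzero[of 0] residue_nonzero[of 1] residue_nonzero[of 2]
    w_pos[of 0] w_pos[of 1] w_pos[of 2]
  by (auto simp: residue_def power_0_left)

lemma beta_fol_vanishes_at_residue_roots:
  assumes "z0 ^ w 0 = lam" "z1 ^ w 1 = mu" "z2 ^ w 2 = gam" and "i < 3"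
  shows "eval3 (beta_fol l0 l1 l2 lam mu gam i) z0 z1 z2 = 0"
proof -
  have "eval_cpoly3 (P i) z0 z1 z2 = 0"
    using less_3_cases[OF \<open>i < 3\<close>]
    by (auto simp: P_def G_def eval_X_at_residue_roots[OF assms(1-3)] residue_def algebra_simps)
  then show ?thesis
    using \<open>i < 3\<close> by (simp add: eval3_eq_eval_cpoly3 to_cpoly3_beta_fol)
qed

lemma invariant_curve_nonvanishing:
  assumes roots: "z0 ^ w 0 = lam" "z1 ^ w 1 = mu" "z2 ^ w 2 = gam"
    and inv: "invariant_curve l0 l1 l2 (beta_fol l0 l1 l2 lam mu gam) F"
  shows "eval3 F z0 z1 z2 \<noteq> 0"
proof -
  let ?F = "to_cpoly3 F"
  obtain K d where eig: "tangent_der ?F = K * ?F" and "?F \<noteq> 0" and hom: "weighted_hom l0 l1 l2 ?F d"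
    using invariant_curve_eigen[OF inv] .
  obtain k where "tangent_der (orbit_prod ?F) = X_comb k * orbit_prod ?F"
    using orbit_prod_eigen[OF eig hom] .
  then obtain c m e where "c \<noteq> 0" and N: "orbit_prod ?F = const3 c * (monomial3 m * G ^ e)"
    using eigen_poly_eq_monomial_G_power[OF orbit_prod_nonzero[OF \<open>?F \<noteq> 0\<close>]
        weighted_hom_orbit_prod[OF hom] orbit_prod_exponents_dvd[of ?F]] by blast
  have "eval_cpoly3 (orbit_prod ?F) z0 z1 z2 \<noteq> 0"
    using \<open>c \<noteq> 0\<close> residue_sum_nonzero residue_roots_nonzero[OF roots]
    by (cases m) (simp add: N G_def eval_X_at_residue_roots[OF roots] residue_def)
  then show ?thesis
    using eval_orbit_prod_eq_0 by (auto simp: eval3_eq_eval_cpoly3)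
qed

lemma singular_point_off_invariant_curves:
  "\<exists>z0 z1 z2. z0 \<noteq> 0 \<and> z1 \<noteq> 0 \<and> z2 \<noteq> 0 \<and>
     fol_singular (beta_fol l0 l1 l2 lam mu gam) z0 z1 z2 \<and>
     (\<forall>F. invariant_curve l0 l1 l2 (beta_fol l0 l1 l2 lam mu gam) F \<longrightarrow> eval3 F z0 z1 z2 \<noteq> 0)"
proof -
  obtain z0 z1 z2 where roots: "z0 ^ w 0 = lam" "z1 ^ w 1 = mu" "z2 ^ w 2 = gam"
    using ex_nth_root[OF w_pos] by metis
  then have "z0 \<noteq> 0" "z1 \<noteq> 0" "z2 \<noteq> 0"
    by (rule residue_roots_nonzero)+
  moreover have "fol_singular (beta_fol l0 l1 l2 lam mu gam) z0 z1 z2"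
    using \<open>z0 \<noteq> 0\<close> beta_fol_vanishes_at_residue_roots[OF roots] by (simp add: fol_singular_def)
  ultimately show ?thesis
    using invariant_curve_nonvanishing[OF roots] by blast
qed

end

theorem proposition4p4:
  fixes l0 l1 l2 :: nat and lam mu gam :: complex
  assumes "coprime l0 l1" and "coprime l0 l2" and "coprime l1 l2"
    and "1 \<le> l0" and "l0 \<le> l1" and "l1 \<le> l2"
    and "\<forall>a b c :: int. of_int a * lam + of_int b * mu + of_int c * gam = 0
            \<longrightarrow> a = 0 \<and> b = 0 \<and> c = 0"
  shows "\<exists>z0 z1 z2. z0 \<noteq> 0 \<and> z1 \<noteq> 0 \<and> z2 \<noteq> 0 \<and>
           fol_singular (beta_fol l0 l1 l2 lam mu gam) z0 z1 z2 \<and>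
           (\<forall>F. invariant_curve l0 l1 l2 (beta_fol l0 l1 l2 lam mu gam) F
                  \<longrightarrow> eval3 F z0 z1 z2 \<noteq> 0)"
proof -
  interpret log_foliation l0 l1 l2 lam mu gam
    using assms by unfold_locales auto
  show ?thesis
    by (rule singular_point_off_invariant_curves)
qed

end
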